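(* Let $\alpha,p\ge0$ be integers and $N\in\mathbb{N}$. The spectral moments of the Laguerre unitary ensemble satisfy $$m_{N,p}^{(\mathrm{L})}=p!\sum_{j=0}^{N-1}\sum_{i=0}^{p}\binom{p}{i}\binom{\alpha+j}{i}\binom{p-i+j}{j}.$$
   Context: The Laguerre unitary ensemble (LUE) of size $N$ with parameter $\alpha$ is the random vector $(x_1,\dots,x_N)\in[0,\infty)^N$ with joint density proportional to $\prod_{1\le j<k\le N}(x_j-x_k)^2\prod_{j=1}^N x_j^{\alpha}e^{-x_j}$. Its spectral moments are $m_{N,p}^{(\mathrm{L})}=\mathbb{E}\big[\sum_{j=1}^N x_j^p\big]$. Binomial coefficients $\binom{n}{m}$ vanish for $m>n$. *)

theory Defs
  imports "HOL-Analysis.Analysis"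
begin

text \<open>Unnormalised joint density of the Laguerre unitary ensemble of size N with
  parameter alpha, as a function on (nat \<Rightarrow> real) (only coordinates 0..N-1 matter),
  supported on [0,\<infinity>)^N.\<close>
definition LUE_weight :: "nat \<Rightarrow> nat \<Rightarrow> (nat \<Rightarrow> real) \<Rightarrow> real" where
  "LUE_weight N \<alpha> x =
     of_bool (\<forall>j<N. 0 \<le> x j) *
     (\<Prod>(j,k)\<in>{(j,k). j < k \<and> k < N}. (x j - x k)^2) *
     (\<Prod>j<N. x j ^ \<alpha> * exp (- x j))"

text \<open>Spectral moment m_{N,p} = E[sum_j x_j^p], the expectation taken w.r.t. the
  normalised density (Lebesgue measure on R^N realised as a finite product measure).\<close>
definition LUE_moment :: "nat \<Rightarrow> nat \<Rightarrow> nat \<Rightarrow> real" where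
  "LUE_moment N \<alpha> p =
     (LINT x | PiM {..<N} (\<lambda>_. lborel). (\<Sum>j<N. x j ^ p) * LUE_weight N \<alpha> x) /
     (LINT x | PiM {..<N} (\<lambda>_. lborel). LUE_weight N \<alpha> x)"

end

theory Submission
  imports Defs "HOL-Computational_Algebra.Polynomial" "HOL-Combinatorics.Permutations"
    "HOL-Probability.Distributions"
begin

(* The squared Vandermonde product equals, up to the constant (\<Prod>i<N. (\<alpha> + i)!)^2, the
   square of the alternant det (P_i (x_j)) of the polynomials P_k = k!/(\<alpha>+k)! L_k^(\<alpha>), which
   are orthogonal for the weight y^\<alpha> e^(-y) on [0, \<infinity>) with squared norms k!/(\<alpha>+k)!.
   Expanding the squared determinant over pairs of permutations and integrating coordinatewise,
   a monomial x_l^p in a single coordinate kills every off-diagonal pair, so the moment is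
   \<Sum>k<N. \<integral> P_k^2 y^p w / \<integral> P_k^2 w.  Expanding P_k, this one-dimensional integral becomes
   an alternating binomial sum, i.e. a finite difference, which Vandermonde's convolution
   evaluates to the stated sum. *)

section \<open>Alternating binomial sums\<close>

(* (-1)^k times the k-th forward difference of g at 0. *)
definition alt_choose_sum :: "nat \<Rightarrow> (nat \<Rightarrow> 'a::comm_ring_1) \<Rightarrow> 'a" where
  "alt_choose_sum k g = (\<Sum>m\<le>k. (-1)^m * of_nat (k choose m) * g m)"

lemma alt_choose_sum_Suc:
  "alt_choose_sum (Suc k) g = alt_choose_sum k g - alt_choose_sum k (\<lambda>m. g (Suc m))"
proof -
  have "alt_choose_sum (Suc k) g =
      g 0 + (\<Sum>i\<le>k. (-1)^Suc i * of_nat (k choose i) * g (Suc i))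
          + (\<Sum>i\<le>k. (-1)^Suc i * of_nat (k choose Suc i) * g (Suc i))"
    unfolding alt_choose_sum_def
    by (simp add: sum.atMost_Suc_shift ring_distribs sum.distrib sum_subtractf sum_negf del: sum.atMost_Suc)
  moreover have "alt_choose_sum k g = (\<Sum>i\<le>Suc k. (-1)^i * of_nat (k choose i) * g i)"
    unfolding alt_choose_sum_def by (simp add: binomial_eq_0)
  then have "alt_choose_sum k g = g 0 + (\<Sum>i\<le>k. (-1)^Suc i * of_nat (k choose Suc i) * g (Suc i))"
    by (simp add: sum.atMost_Suc_shift del: sum.atMost_Suc)
  moreover have "alt_choose_sum k (\<lambda>m. g (Suc m)) = - (\<Sum>i\<le>k. (-1)^Suc i * of_nat (k choose i) * g (Suc i))"
    unfolding alt_choose_sum_def by (simp add: sum_negf[symmetric])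
  ultimately show ?thesis by simp
qed

lemma alt_choose_sum_shifted_choose:
  "alt_choose_sum k (\<lambda>m. of_nat ((a + m) choose j)) =
     (if k \<le> j then (-1)^k * of_nat (a choose (j - k)) else (0::'a::comm_ring_1))"
proof (induction k arbitrary: a)
  case 0
  then show ?case by (simp add: alt_choose_sum_def)
next
  case (Suc k)
  have "alt_choose_sum (Suc k) (\<lambda>m. of_nat ((a + m) choose j)) =
      alt_choose_sum k (\<lambda>m. of_nat ((a + m) choose j)) - alt_choose_sum k (\<lambda>m. of_nat ((Suc a + m) choose j) :: 'a)"
    by (simp add: alt_choose_sum_Suc)
  also have "\<dots> = (if k \<le> j then (-1)^k * (of_nat (a choose (j - k)) - of_nat (Suc a choose (j - k))) else 0)"
    using Suc.IH[of a] Suc.IH[of "Suc a"] by (simp add: algebra_simps)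
  also have "\<dots> = (if Suc k \<le> j then (-1)^Suc k * of_nat (a choose (j - Suc k)) else 0)"
  proof (cases "Suc k \<le> j")
    case True
    then have "j - k = Suc (j - Suc k)" by simp
    then show ?thesis using True by simp
  next
    case False
    then show ?thesis by (cases "k = j") auto
  qed
  finally show ?case .
qed

lemma alt_choose_sum_sum:
  "finite I \<Longrightarrow> alt_choose_sum k (\<lambda>m. \<Sum>i\<in>I. f i m) = (\<Sum>i\<in>I. alt_choose_sum k (f i))"
  unfolding alt_choose_sum_def by (simp add: sum_distrib_left sum.swap[of _ I] algebra_simps)

lemma alt_choose_sum_cmult: "alt_choose_sum k (\<lambda>m. c * g m) = c * alt_choose_sum k g"
  unfolding alt_choose_sum_def by (simp add: sum_distrib_left algebra_simps)

(* Vandermonde's convolution for the second factor, then trinomial revision. *)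
lemma choose_mult_choose_expansion:
  "(p + m choose k) * (p + a + m choose p) =
   (\<Sum>i\<le>p. ((a + k) choose i) * ((p + k - i) choose k) * ((p + m) choose (p + k - i)))"
proof (cases "k \<le> p + m")
  case False
  then show ?thesis by (simp add: binomial_eq_0)
next
  case True
  have "(p + a + m choose p) = (\<Sum>i\<le>p. ((a + k) choose i) * ((p + m - k) choose (p - i)))"
    using vandermonde[of "a + k" "p + m - k" p] True by (simp add: algebra_simps)
  then have "(p + m choose k) * (p + a + m choose p) =
     (\<Sum>i\<le>p. ((a + k) choose i) * ((p + m choose k) * ((p + m - k) choose (p - i))))"
    by (simp add: sum_distrib_left algebra_simps)
  also have "\<dots> = (\<Sum>i\<le>p. ((a + k) choose i) * ((p + k - i) choose k) * ((p + m) choose (p + k - i)))"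
  proof (rule sum.cong)
    fix i assume i: "i \<in> {..p}"
    show "((a + k) choose i) * ((p + m choose k) * ((p + m - k) choose (p - i))) =
        ((a + k) choose i) * ((p + k - i) choose k) * ((p + m) choose (p + k - i))"
    proof (cases "p + k - i \<le> p + m")
      case True
      have "(p + m choose (p + k - i)) * ((p + k - i) choose k) =
          (p + m choose k) * ((p + m - k) choose (p + k - i - k))"
        by (rule choose_mult) (use True i in auto)
      moreover have "p + k - i - k = p - i" using i by auto
      ultimately show ?thesis by (simp add: algebra_simps)
    next
      case False
      then have "p + m - k < p - i" using i \<open>k \<le> p + m\<close> by auto
      then show ?thesis using False by (simp add: binomial_eq_0)
    qed
  qed simp
  finally show ?thesis .
qed

lemma alt_choose_sum_choose_mult_choose:
  "alt_choose_sum k (\<lambda>m. of_nat ((p + m choose k) * (p + a + m choose p))) =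
   (-1)^k * (\<Sum>i\<le>p. of_nat ((p choose i) * ((a + k) choose i) * ((p - i + k) choose k)) :: 'a::comm_ring_1)"
proof -
  have "alt_choose_sum k (\<lambda>m. of_nat ((p + m choose k) * (p + a + m choose p))) =
      alt_choose_sum k (\<lambda>m. \<Sum>i\<le>p. of_nat (((a + k) choose i) * ((p + k - i) choose k)) *
        (of_nat ((p + m) choose (p + k - i)) :: 'a))"
    by (simp only: choose_mult_choose_expansion of_nat_sum of_nat_mult)
  also have "\<dots> = (\<Sum>i\<le>p. of_nat (((a + k) choose i) * ((p + k - i) choose k)) *
      alt_choose_sum k (\<lambda>m. of_nat ((p + m) choose (p + k - i))))"
    by (simp add: alt_choose_sum_sum alt_choose_sum_cmult)
  also have "\<dots> = (\<Sum>i\<le>p. of_nat (((a + k) choose i) * ((p + k - i) choose k)) *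
      ((-1)^k * of_nat (p choose i)))"
  proof (rule sum.cong)
    fix i assume "i \<in> {..p}"
    then have "p + k - i - k = p - i" "i \<le> p" by auto
    then show "of_nat (((a + k) choose i) * ((p + k - i) choose k)) *
        alt_choose_sum k (\<lambda>m. of_nat ((p + m) choose (p + k - i))) =
      of_nat (((a + k) choose i) * ((p + k - i) choose k)) * ((-1)^k * (of_nat (p choose i) :: 'a))"
      by (simp add: alt_choose_sum_shifted_choose binomial_symmetric[symmetric])
  qed simp
  also have "\<dots> = (-1)^k * (\<Sum>i\<le>p. of_nat ((p choose i) * ((a + k) choose i) * ((p - i + k) choose k)))"
    by (auto simp: sum_distrib_left algebra_simps intro!: sum.cong)
  finally show ?thesis .
qed

section \<open>The Laguerre weight and its orthogonal polynomials\<close>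

(* The integral of q(y) y^a e^(-y) over [0, \<infinity>), written through the moments (n + a)!
   so that linearity is algebraic; see has_bochner_integral_poly_laguerre_weight. *)
definition laguerre_functional :: "nat \<Rightarrow> real poly \<Rightarrow> real" where
  "laguerre_functional a q = (\<Sum>n\<le>degree q. coeff q n * fact (n + a))"

lemma laguerre_functional_eq_sum_upto:
  "degree q \<le> D \<Longrightarrow> laguerre_functional a q = (\<Sum>n\<le>D. coeff q n * fact (n + a))"
  unfolding laguerre_functional_def
  by (rule sum.mono_neutral_left) (auto simp: coeff_eq_0)

lemma laguerre_functional_add:
  "laguerre_functional a (p + q) = laguerre_functional a p + laguerre_functional a q"
proof -
  let ?D = "max (degree p) (degree q)"
  have "laguerre_functional a (p + q) = (\<Sum>n\<le>?D. coeff (p + q) n * fact (n + a))"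
    by (rule laguerre_functional_eq_sum_upto) (rule degree_add_le_max)
  then show ?thesis
    using laguerre_functional_eq_sum_upto[of p ?D a] laguerre_functional_eq_sum_upto[of q ?D a]
    by (simp add: sum.distrib algebra_simps)
qed

lemma laguerre_functional_smult: "laguerre_functional a (smult c q) = c * laguerre_functional a q"
  using laguerre_functional_eq_sum_upto[of "smult c q" "degree q" a]
  by (simp add: laguerre_functional_def sum_distrib_left algebra_simps)

lemma laguerre_functional_sum:
  "finite A \<Longrightarrow> laguerre_functional a (\<Sum>i\<in>A. f i) = (\<Sum>i\<in>A. laguerre_functional a (f i))"
  by (induction A rule: finite_induct)
    (simp_all add: laguerre_functional_add laguerre_functional_def[of _ 0])

lemma laguerre_functional_monom: "laguerre_functional a (monom c n) = c * fact (n + a)"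
proof -
  have "(\<Sum>i\<le>n. coeff (monom c n) i * fact (i + a)) = (\<Sum>i\<le>n. if i = n then c * fact (n + a) else 0)"
    by (rule sum.cong) (auto simp: coeff_monom)
  then show ?thesis
    by (subst laguerre_functional_eq_sum_upto[of _ n]) (simp_all add: degree_monom_le)
qed

lemma laguerre_functional_mult:
  "laguerre_functional a (q * r) = (\<Sum>m\<le>degree q. coeff q m * laguerre_functional a (monom 1 m * r))"
proof -
  have "q * r = (\<Sum>m\<le>degree q. smult (coeff q m) (monom 1 m * r))"
    by (subst (1) poly_as_sum_of_monoms[symmetric])
      (simp add: sum_distrib_right mult_smult_left[symmetric] smult_monom)
  then show ?thesis by (simp add: laguerre_functional_sum laguerre_functional_smult)
qed

definition laguerre_weight :: "nat \<Rightarrow> real \<Rightarrow> real" where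
  "laguerre_weight a y = of_bool (0 \<le> y) * (y ^ a * exp (- y))"

lemma has_bochner_integral_laguerre_weight:
  "has_bochner_integral lborel (laguerre_weight n) (fact n)"
proof -
  have "(\<integral>\<^sup>+y. ennreal (laguerre_weight n y) \<partial>lborel) =
        (\<integral>\<^sup>+y. ennreal (y ^ n * exp (- y)) * indicator {0..} y \<partial>lborel)"
    by (rule nn_integral_cong) (auto simp: laguerre_weight_def indicator_def)
  also have "\<dots> = ennreal (fact n)"
    using nn_intergal_power_times_exp_Ici[of n] by simp
  finally have "(\<integral>\<^sup>+y. ennreal (laguerre_weight n y) \<partial>lborel) = ennreal (fact n)" .
  moreover have "laguerre_weight n \<in> borel_measurable borel"
    unfolding laguerre_weight_def[abs_def] by measurable
  ultimately show ?thesis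
    by (subst has_bochner_integral_nn_integral) (auto simp: laguerre_weight_def)
qed

lemma has_bochner_integral_poly_laguerre_weight:
  "has_bochner_integral lborel (\<lambda>y. poly q y * laguerre_weight a y) (laguerre_functional a q)"
proof -
  have "(\<lambda>y. poly q y * laguerre_weight a y) =
     (\<lambda>y. \<Sum>n\<le>degree q. coeff q n * laguerre_weight (n + a) y)"
    by (simp add: laguerre_weight_def poly_altdef sum_distrib_left sum_distrib_right power_add mult_ac)
  then show ?thesis
    unfolding laguerre_functional_def
    by (auto intro!: has_bochner_integral_sum has_bochner_integral_mult_right
        has_bochner_integral_laguerre_weight)
qed

(* k! / (a + k)! times the classical Laguerre polynomial L_k^(a). *)
definition laguerre_poly :: "nat \<Rightarrow> nat \<Rightarrow> real poly" where
  "laguerre_poly a k = (\<Sum>m\<le>k. monom ((-1)^m * real (k choose m) / fact (a + m)) m)"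

lemma coeff_laguerre_poly:
  "coeff (laguerre_poly a k) m = (if m \<le> k then (-1)^m * real (k choose m) / fact (a + m) else 0)"
  unfolding laguerre_poly_def by (simp add: coeff_sum coeff_monom)

lemma degree_laguerre_poly: "degree (laguerre_poly a k) = k"
proof (rule antisym)
  show "degree (laguerre_poly a k) \<le> k"
    by (auto simp: coeff_laguerre_poly intro!: degree_le)
  show "k \<le> degree (laguerre_poly a k)"
    by (rule le_degree) (simp add: coeff_laguerre_poly)
qed

lemma laguerre_functional_monom_mult_laguerre_poly:
  "laguerre_functional a (monom 1 n * laguerre_poly a k) =
     fact n * (if k \<le> n then (-1)^k * real ((n + a) choose (n - k)) else 0)"
proof -
  have fact_ratio: "fact (n + m + a) / fact (a + m) = fact n * real ((n + a + m) choose n)" for m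
    by (simp add: binomial_fact field_simps algebra_simps)
  have "laguerre_functional a (monom 1 n * laguerre_poly a k) =
      (\<Sum>m\<le>k. (-1)^m * real (k choose m) * (fact (n + m + a) / fact (a + m)))"
    by (simp add: laguerre_poly_def sum_distrib_left mult_monom laguerre_functional_sum
        laguerre_functional_monom algebra_simps)
  also have "\<dots> = fact n * alt_choose_sum k (\<lambda>m. real ((n + a + m) choose n))"
    by (simp add: alt_choose_sum_def sum_distrib_left fact_ratio mult_ac)
  also have "\<dots> = fact n * (if k \<le> n then (-1)^k * real ((n + a) choose (n - k)) else 0)"
    by (subst alt_choose_sum_shifted_choose) simp
  finally show ?thesis .
qed

lemma laguerre_functional_laguerre_poly_orthogonal:
  assumes "j \<noteq> k"
  shows "laguerre_functional a (laguerre_poly a j * laguerre_poly a k) = 0"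
proof -
  have lower: "laguerre_functional a (laguerre_poly a i * laguerre_poly a l) = 0" if "i < l" for i l
    using that by (subst laguerre_functional_mult)
      (simp add: degree_laguerre_poly laguerre_functional_monom_mult_laguerre_poly)
  show ?thesis
    using assms lower[of j k] lower[of k j] by (cases "j < k") (simp_all add: mult.commute)
qed

lemma laguerre_functional_laguerre_poly_square:
  "laguerre_functional a (laguerre_poly a k * laguerre_poly a k) = fact k / fact (a + k)"
proof -
  have "laguerre_functional a (laguerre_poly a k * laguerre_poly a k) =
      (\<Sum>m\<le>k. coeff (laguerre_poly a k) m * laguerre_functional a (monom 1 m * laguerre_poly a k))"
    by (subst laguerre_functional_mult) (simp add: degree_laguerre_poly)
  also have "\<dots> = (\<Sum>m\<le>k. if m = k then fact k / fact (a + k) else 0)"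
    by (rule sum.cong) (auto simp: laguerre_functional_monom_mult_laguerre_poly coeff_laguerre_poly)
  finally show ?thesis by simp
qed

definition LUE_moment_summand :: "nat \<Rightarrow> nat \<Rightarrow> nat \<Rightarrow> real" where
  "LUE_moment_summand a p k =
     fact p * (\<Sum>i\<le>p. real ((p choose i) * ((a + k) choose i) * ((p - i + k) choose k)))"

lemma LUE_moment_summand_0 [simp]: "LUE_moment_summand a 0 k = 1"
  by (simp add: LUE_moment_summand_def)

lemma laguerre_functional_laguerre_poly_square_monom:
  "laguerre_functional a (laguerre_poly a k * laguerre_poly a k * monom 1 p) =
     fact k / fact (a + k) * LUE_moment_summand a p k"
proof -
  have fact_identity:
    "fact (m + p) * real ((m + p + a) choose (m + p - k)) / fact (a + m) =
       fact k * fact p / fact (a + k) * real ((p + m choose k) * (p + a + m choose p))"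
    if "k \<le> m + p" for m
  proof -
    have c1: "real ((m + p + a) choose (m + p - k)) = fact (m + p + a) / (fact (m + p - k) * fact (a + k))"
      using that by (subst binomial_fact) (auto intro!: arg_cong[where f=fact])
    have c2: "real ((p + a + m) choose p) = fact (m + p + a) / (fact p * fact (a + m))"
      by (subst binomial_fact) (auto simp: algebra_simps intro!: arg_cong[where f=fact])
    have c3: "real ((p + m) choose k) = fact (m + p) / (fact k * fact (m + p - k))"
      using that by (subst binomial_fact) (auto simp: algebra_simps)
    show ?thesis unfolding of_nat_mult c1 c2 c3 by (simp add: field_simps)
  qed
  have "laguerre_functional a (laguerre_poly a k * laguerre_poly a k * monom 1 p) =
      (\<Sum>m\<le>k. coeff (laguerre_poly a k) m * laguerre_functional a (monom 1 (m + p) * laguerre_poly a k))"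
    by (subst mult.assoc, subst mult.commute[of _ "monom 1 p"], subst laguerre_functional_mult)
      (simp add: degree_laguerre_poly mult_monom mult.assoc[symmetric])
  also have "\<dots> = (\<Sum>m\<le>k. (-1)^k * ((-1)^m * real (k choose m)) *
      (if k \<le> m + p then fact (m + p) * real ((m + p + a) choose (m + p - k)) / fact (a + m) else 0))"
    by (rule sum.cong)
      (auto simp: coeff_laguerre_poly laguerre_functional_monom_mult_laguerre_poly)
  also have "\<dots> = (\<Sum>m\<le>k. fact k * fact p / fact (a + k) * (-1)^k *
      ((-1)^m * real (k choose m) * real ((p + m choose k) * (p + a + m choose p))))"
    by (rule sum.cong) (auto simp: fact_identity binomial_eq_0)
  also have "\<dots> = fact k * fact p / fact (a + k) * (-1)^k *
      alt_choose_sum k (\<lambda>m. real ((p + m choose k) * (p + a + m choose p)))"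
    by (simp add: alt_choose_sum_def sum_distrib_left)
  also have "\<dots> = fact k / fact (a + k) * LUE_moment_summand a p k"
    unfolding alt_choose_sum_choose_mult_choose by (simp add: LUE_moment_summand_def)
  finally show ?thesis .
qed

lemma permutes_insert_fixing:
  assumes "a \<notin> S"
  shows "{\<sigma>. \<sigma> permutes insert a S \<and> \<sigma> a = a} = {\<sigma>. \<sigma> permutes S}"
proof (intro set_eqI iffI; clarify)
  fix \<sigma> assume "\<sigma> permutes insert a S" "\<sigma> a = a"
  then show "\<sigma> permutes S" using permutes_superset[of \<sigma> "insert a S" S] by auto
next
  fix \<sigma> assume "\<sigma> permutes S"
  then show "\<sigma> permutes insert a S \<and> \<sigma> a = a"
    using assms by (auto intro: permutes_subset permutes_not_in)
qed

lemma prod_permutes_apply: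
  "\<sigma> permutes {..<N} \<Longrightarrow> (\<Prod>j<N. f (\<sigma> j)) = (\<Prod>j<N. f j)"
  using prod.permute[of \<sigma> "{..<N}" f] by (simp add: comp_def)

lemma sum_permutes_sum_apply:
  assumes "finite A"
  shows "(\<Sum>\<sigma> | \<sigma> permutes A. \<Sum>l\<in>A. f (\<sigma> l)) = fact (card A) * (\<Sum>l\<in>A. f l)"
proof -
  have "(\<Sum>\<sigma> | \<sigma> permutes A. \<Sum>l\<in>A. f (\<sigma> l)) = (\<Sum>\<sigma> | \<sigma> permutes A. \<Sum>l\<in>A. f l)"
    using sum.permute[of _ A f] by (simp add: comp_def)
  then show ?thesis using assms by (simp add: card_permutations)
qed

lemma permutes_eq_if_agree_off:
  assumes \<sigma>: "\<sigma> permutes A" and \<tau>: "\<tau> permutes A" and agree: "\<And>j. j \<in> A \<Longrightarrow> j \<noteq> l \<Longrightarrow> \<sigma> j = \<tau> j"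
  shows "\<sigma> = \<tau>"
proof
  fix j
  show "\<sigma> j = \<tau> j"
  proof (cases "j \<in> A \<and> j = l")
    case True
    then obtain k where k: "k \<in> A" "\<tau> k = \<sigma> l"
      using permutes_in_image[OF \<sigma>, of l] permutes_image[OF \<tau>] by (metis imageE)
    have "k = l"
    proof (rule ccontr)
      assume "k \<noteq> l"
      then have "\<sigma> k = \<sigma> l" using agree k by simp
      then show False using \<open>k \<noteq> l\<close> permutes_inj[OF \<sigma>] by (simp add: inj_eq)
    qed
    then show ?thesis using k True by simp
  next
    case False
    then show ?thesis
      using agree permutes_not_in[OF \<sigma>] permutes_not_in[OF \<tau>] by (cases "j \<in> A") auto
  qed
qed

lemma sum_permutes_sign_sign_prod_diagonal:
  fixes c :: "'a \<Rightarrow> 'a \<Rightarrow> 'a \<Rightarrow> real"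
  assumes "finite A" and diagonal: "\<And>j i i'. j \<in> A \<Longrightarrow> j \<noteq> l \<Longrightarrow> i \<noteq> i' \<Longrightarrow> c j i i' = 0"
  shows "(\<Sum>\<sigma> | \<sigma> permutes A. \<Sum>\<tau> | \<tau> permutes A. of_int (sign \<sigma> * sign \<tau>) * (\<Prod>j\<in>A. c j (\<sigma> j) (\<tau> j))) =
    (\<Sum>\<sigma> | \<sigma> permutes A. \<Prod>j\<in>A. c j (\<sigma> j) (\<sigma> j))"
proof (rule sum.cong)
  fix \<sigma> assume "\<sigma> \<in> {\<sigma>. \<sigma> permutes A}"
  then have \<sigma>: "\<sigma> permutes A" by simp
  have fin: "finite {\<tau>. \<tau> permutes A}" using assms(1) by (rule finite_permutations)
  have "(\<Prod>j\<in>A. c j (\<sigma> j) (\<tau> j)) = 0" if \<tau>: "\<tau> permutes A" and "\<tau> \<noteq> \<sigma>" for \<tau>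
  proof -
    obtain j where "j \<in> A" "j \<noteq> l" "\<sigma> j \<noteq> \<tau> j"
      using permutes_eq_if_agree_off[OF \<sigma> \<tau>] \<open>\<tau> \<noteq> \<sigma>\<close> by blast
    then show ?thesis using assms(1) diagonal by (auto intro!: prod_zero)
  qed
  then show "(\<Sum>\<tau> | \<tau> permutes A. of_int (sign \<sigma> * sign \<tau>) * (\<Prod>j\<in>A. c j (\<sigma> j) (\<tau> j))) =
      (\<Prod>j\<in>A. c j (\<sigma> j) (\<sigma> j))"
    using \<sigma> by (subst sum.remove[OF fin, of \<sigma>]) (auto intro!: sum.neutral)
qed simp

section \<open>Alternants and the Vandermonde product\<close>

definition alternant :: "(nat \<Rightarrow> real poly) \<Rightarrow> nat \<Rightarrow> (nat \<Rightarrow> real) \<Rightarrow> real" where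
  "alternant Q N x =
     (\<Sum>\<sigma> | \<sigma> permutes {..<N}. of_int (sign \<sigma>) * (\<Prod>j<N. poly (Q (\<sigma> j)) (x j)))"

definition vandermonde_prod :: "nat \<Rightarrow> (nat \<Rightarrow> real) \<Rightarrow> real" where
  "vandermonde_prod N x = (\<Prod>(j, k) \<in> {(j, k). j < k \<and> k < N}. x k - x j)"

lemma alternant_eq_0_if_coordinates_eq:
  assumes "i < N" "j < N" "i \<noteq> j" "x i = x j"
  shows "alternant Q N x = 0"
proof -
  let ?t = "Transposition.transpose i j"
  let ?f = "\<lambda>\<sigma>. of_int (sign \<sigma>) * (\<Prod>l<N. poly (Q (\<sigma> l)) (x l))"
  have t: "?t permutes {..<N}" using assms by (intro permutes_swap_id) auto
  have "?f (\<sigma> \<circ> ?t) = - ?f \<sigma>" if \<sigma>: "\<sigma> permutes {..<N}" for \<sigma>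
  proof -
    have "sign (\<sigma> \<circ> ?t) = - sign \<sigma>"
    proof -
      have "permutation \<sigma>" "permutation ?t"
        using \<sigma> t by (auto intro: permutes_imp_permutation[of "{..<N}"])
      then show ?thesis using assms by (simp add: sign_compose sign_swap_id)
    qed
    moreover have "(\<Prod>l<N. poly (Q ((\<sigma> \<circ> ?t) l)) (x l)) = (\<Prod>l<N. poly (Q (\<sigma> l)) (x l))"
    proof -
      have "(\<Prod>l<N. poly (Q ((\<sigma> \<circ> ?t) l)) (x l)) = (\<Prod>l<N. ((\<lambda>l. poly (Q (\<sigma> l)) (x l)) \<circ> ?t) l)"
        using assms by (intro prod.cong) (auto simp: Transposition.transpose_def)
      also have "\<dots> = (\<Prod>l<N. poly (Q (\<sigma> l)) (x l))"
        by (rule prod.permute[OF t, symmetric])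
      finally show ?thesis .
    qed
    ultimately show ?thesis by simp
  qed
  then have "alternant Q N x = (\<Sum>\<sigma> | \<sigma> permutes {..<N}. - ?f \<sigma>)"
    unfolding alternant_def by (subst sum_permutations_compose_right[OF t]) (auto intro: sum.cong)
  then show ?thesis by (simp add: alternant_def sum_negf)
qed

definition alternant_poly :: "(nat \<Rightarrow> real poly) \<Rightarrow> nat \<Rightarrow> (nat \<Rightarrow> real) \<Rightarrow> real poly" where
  "alternant_poly Q N x =
     (\<Sum>\<sigma> | \<sigma> permutes {..<Suc N}. smult (of_int (sign \<sigma>) * (\<Prod>j<N. poly (Q (\<sigma> j)) (x j))) (Q (\<sigma> N)))"

lemma poly_alternant_poly: "poly (alternant_poly Q N x) t = alternant Q (Suc N) (x(N := t))"
  unfolding alternant_poly_def alternant_def poly_sum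
  by (rule sum.cong) (auto simp: lessThan_Suc intro!: prod.cong)

lemma
  assumes "\<And>i. degree (Q i) \<le> i"
  shows degree_alternant_poly: "degree (alternant_poly Q N x) \<le> N"
    and coeff_alternant_poly: "coeff (alternant_poly Q N x) N = coeff (Q N) N * alternant Q N x"
proof -
  have fin: "finite {\<sigma>. \<sigma> permutes {..<Suc N}}" by (rule finite_permutations) simp
  have coeff_Q: "coeff (Q (\<sigma> N)) n = (if \<sigma> N = N \<and> n = N then coeff (Q N) N else 0)"
    if "\<sigma> permutes {..<Suc N}" "N \<le> n" for \<sigma> n
    using permutes_in_image[OF that(1), of N] assms[of "\<sigma> N"] that(2)
    by (auto simp: coeff_eq_0)
  show "degree (alternant_poly Q N x) \<le> N"
    by (rule degree_le) (auto simp: alternant_poly_def coeff_sum coeff_Q intro!: sum.neutral)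
  have "coeff (alternant_poly Q N x) N = (\<Sum>\<sigma> | \<sigma> permutes {..<Suc N}.
      if \<sigma> N = N then coeff (Q N) N * (of_int (sign \<sigma>) * (\<Prod>j<N. poly (Q (\<sigma> j)) (x j))) else 0)"
    unfolding alternant_poly_def coeff_sum by (rule sum.cong) (auto simp: coeff_Q)
  also have "\<dots> = (\<Sum>\<sigma> \<in> {\<sigma> \<in> {\<sigma>. \<sigma> permutes {..<Suc N}}. \<sigma> N = N}.
      coeff (Q N) N * (of_int (sign \<sigma>) * (\<Prod>j<N. poly (Q (\<sigma> j)) (x j))))"
    by (rule sum.inter_filter[OF fin, symmetric])
  also have "\<dots> = coeff (Q N) N * alternant Q N x"
    using permutes_insert_fixing[of N "{..<N}"]
    by (simp add: lessThan_Suc alternant_def sum_distrib_left)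
  finally show "coeff (alternant_poly Q N x) N = coeff (Q N) N * alternant Q N x" .
qed

lemma vandermonde_prod_Suc:
  "vandermonde_prod (Suc N) x = vandermonde_prod N x * (\<Prod>j<N. x N - x j)"
proof -
  have pairs: "{(j, k). j < k \<and> k < Suc N} = {(j, k). j < k \<and> k < N} \<union> (\<lambda>j. (j, N)) ` {..<N}"
    by auto
  have fin: "finite {(j, k). j < k \<and> k < N}"
    by (rule finite_subset[of _ "{..<N} \<times> {..<N}"]) auto
  show ?thesis
    unfolding vandermonde_prod_def pairs
    by (subst prod.union_disjoint) (auto simp: fin prod.reindex inj_on_def)
qed

lemma alternant_Suc:
  assumes "\<And>i. degree (Q i) \<le> i"
  shows "alternant Q (Suc N) x = coeff (Q N) N * alternant Q N x * (\<Prod>j<N. x N - x j)"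
proof (cases "inj_on x {..<N}")
  case True
  define R where "R = smult (coeff (Q N) N * alternant Q N x) (\<Prod>j<N. [:- x j, 1:])"
  have deg_roots: "degree (\<Prod>j<N. [:- x j, 1:]) = N"
    by (subst degree_prod_eq_sum_degree) auto
  have "alternant_poly Q N x = R"
  proof (rule poly_eqI_degree_lead_coeff[where n = N and A = "x ` {..<N}"])
    show "coeff (alternant_poly Q N x) N = coeff R N"
      using lead_coeff_prod[of "\<lambda>j. [:- x j, 1:]" "{..<N}"] deg_roots
      by (simp add: R_def coeff_alternant_poly[OF assms])
    show "N \<le> card (x ` {..<N})" using True by (simp add: card_image)
    show "degree (alternant_poly Q N x) \<le> N" by (rule degree_alternant_poly[OF assms])
    show "degree R \<le> N" unfolding R_def using deg_roots by (metis degree_smult_le)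
    fix z assume "z \<in> x ` {..<N}"
    then obtain j where j: "j < N" "z = x j" by auto
    have "poly (alternant_poly Q N x) z = 0"
      unfolding poly_alternant_poly j(2)
      by (rule alternant_eq_0_if_coordinates_eq[of j "Suc N" N]) (use j in auto)
    moreover have "poly R z = 0" using j by (auto simp: R_def poly_prod intro!: prod_zero)
    ultimately show "poly (alternant_poly Q N x) z = poly R z" by simp
  qed
  then have "alternant Q (Suc N) x = poly R (x N)"
    using poly_alternant_poly[of Q N x "x N"] by simp
  then show ?thesis by (simp add: R_def poly_prod)
next
  case False
  then obtain i j where "i < N" "j < N" "i \<noteq> j" "x i = x j"
    by (auto simp: inj_on_def)
  then show ?thesis
    using alternant_eq_0_if_coordinates_eq[of i "Suc N" j x Q] alternant_eq_0_if_coordinates_eq[of i N j x Q]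
    by simp
qed

theorem alternant_eq_vandermonde_prod:
  assumes "\<And>i. degree (Q i) \<le> i"
  shows "alternant Q N x = (\<Prod>i<N. coeff (Q i) i) * vandermonde_prod N x"
proof (induction N)
  case 0
  then show ?case by (simp add: alternant_def vandermonde_prod_def)
next
  case (Suc N)
  then show ?case by (simp add: alternant_Suc[OF assms] vandermonde_prod_Suc algebra_simps)
qed

section \<open>Integrals of squared alternants\<close>

lemma has_bochner_integral_prod_lborel:
  fixes f :: "'i \<Rightarrow> real \<Rightarrow> real"
  assumes "finite I" "\<And>i. i \<in> I \<Longrightarrow> has_bochner_integral lborel (f i) (c i)"
  shows "has_bochner_integral (PiM I (\<lambda>_. lborel)) (\<lambda>x. \<Prod>i\<in>I. f i (x i)) (\<Prod>i\<in>I. c i)"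
proof -
  interpret product_sigma_finite "\<lambda>_::'i. lborel :: real measure"
    by (simp add: product_sigma_finite_def sigma_finite_lborel)
  show ?thesis
    using assms by (auto simp: has_bochner_integral_iff product_integral_prod intro!: product_integrable_prod)
qed

lemma has_bochner_integral_alternant_square:
  "has_bochner_integral (PiM {..<N} (\<lambda>_. lborel))
     (\<lambda>x. alternant Q N x ^ 2 * (\<Prod>j<N. laguerre_weight a (x j) * x j ^ e j))
     (\<Sum>\<sigma> | \<sigma> permutes {..<N}. \<Sum>\<tau> | \<tau> permutes {..<N}. of_int (sign \<sigma> * sign \<tau>) *
        (\<Prod>j<N. laguerre_functional a (Q (\<sigma> j) * Q (\<tau> j) * monom 1 (e j))))"
proof -
  define g where "g \<sigma> \<tau> j y = poly (Q (\<sigma> j) * Q (\<tau> j) * monom 1 (e j)) y * laguerre_weight a y"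
    for \<sigma> \<tau> :: "nat \<Rightarrow> nat" and j y
  have "alternant Q N x ^ 2 * (\<Prod>j<N. laguerre_weight a (x j) * x j ^ e j) =
      (\<Sum>\<sigma> | \<sigma> permutes {..<N}. \<Sum>\<tau> | \<tau> permutes {..<N}.
         of_int (sign \<sigma> * sign \<tau>) * (\<Prod>j<N. g \<sigma> \<tau> j (x j)))" for x
    unfolding alternant_def power2_eq_square sum_product g_def
    by (simp add: sum_distrib_left sum_distrib_right poly_monom prod.distrib[symmetric] mult_ac)
  moreover have "has_bochner_integral (PiM {..<N} (\<lambda>_. lborel)) (\<lambda>x. \<Prod>j<N. g \<sigma> \<tau> j (x j))
      (\<Prod>j<N. laguerre_functional a (Q (\<sigma> j) * Q (\<tau> j) * monom 1 (e j)))" for \<sigma> \<tau>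
    unfolding g_def by (intro has_bochner_integral_prod_lborel has_bochner_integral_poly_laguerre_weight) simp
  ultimately show ?thesis
    by (auto intro!: has_bochner_integral_sum)
qed

section \<open>Moments of the Laguerre unitary ensemble\<close>

lemma LUE_weight_eq_alternant_square:
  "LUE_weight N a x = (\<Prod>i<N. fact (a + i))\<^sup>2 * (alternant (laguerre_poly a) N x)\<^sup>2 *
     (\<Prod>j<N. laguerre_weight a (x j))"
proof -
  have "(\<Prod>(j, k) \<in> {(j, k). j < k \<and> k < N}. (x j - x k)\<^sup>2) = (vandermonde_prod N x)\<^sup>2"
    unfolding vandermonde_prod_def
    by (subst prod_power_distrib) (auto intro!: prod.cong simp: power2_commute)
  also have "(vandermonde_prod N x)\<^sup>2 = (\<Prod>i<N. fact (a + i))\<^sup>2 * (alternant (laguerre_poly a) N x)\<^sup>2"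
  proof -
    have "(\<Prod>i<N. fact (a + i)) * alternant (laguerre_poly a) N x =
        (\<Prod>i<N. (-1)^i) * vandermonde_prod N x"
      by (simp add: alternant_eq_vandermonde_prod degree_laguerre_poly coeff_laguerre_poly
          prod.distrib[symmetric])
    moreover have "(\<Prod>i<N. (-1::real)^i)\<^sup>2 = 1"
      by (simp add: prod_power_distrib power_mult[symmetric] mult.commute[of _ 2] power_mult)
    ultimately show ?thesis by (metis power_mult_distrib mult_1)
  qed
  moreover have "of_bool (\<forall>j<N. 0 \<le> x j) = (\<Prod>j<N. of_bool (0 \<le> x j) :: real)"
    by (induction N) (auto simp: less_Suc_eq)
  ultimately show ?thesis
    by (simp add: LUE_weight_def laguerre_weight_def prod.distrib mult_ac)
qed

lemma has_bochner_integral_LUE_weight_monomial: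
  assumes single: "\<And>j. j \<noteq> l \<Longrightarrow> e j = 0"
  shows "has_bochner_integral (PiM {..<N} (\<lambda>_. lborel))
    (\<lambda>x. LUE_weight N a x * (\<Prod>j<N. x j ^ e j))
    ((\<Prod>i<N. fact i * fact (a + i)) *
       (\<Sum>\<sigma> | \<sigma> permutes {..<N}. \<Prod>j<N. LUE_moment_summand a (e j) (\<sigma> j)))"
proof -
  let ?c = "\<lambda>j i i'. laguerre_functional a (laguerre_poly a i * laguerre_poly a i' * monom 1 (e j))"
  have "(\<Sum>\<sigma> | \<sigma> permutes {..<N}. \<Sum>\<tau> | \<tau> permutes {..<N}. of_int (sign \<sigma> * sign \<tau>) *
        (\<Prod>j<N. ?c j (\<sigma> j) (\<tau> j))) = (\<Sum>\<sigma> | \<sigma> permutes {..<N}. \<Prod>j<N. ?c j (\<sigma> j) (\<sigma> j))"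
    using single
    by (intro sum_permutes_sign_sign_prod_diagonal[where l = l])
      (simp_all add: laguerre_functional_laguerre_poly_orthogonal monom_eq_1)
  also have "\<dots> = (\<Prod>i<N. fact i / fact (a + i)) *
      (\<Sum>\<sigma> | \<sigma> permutes {..<N}. \<Prod>j<N. LUE_moment_summand a (e j) (\<sigma> j))"
    unfolding laguerre_functional_laguerre_poly_square_monom prod.distrib sum_distrib_left
    by (intro sum.cong) (simp_all add: prod_permutes_apply[where f = "\<lambda>i. fact i / fact (a + i)"])
  finally have "has_bochner_integral (PiM {..<N} (\<lambda>_. lborel))
      (\<lambda>x. (alternant (laguerre_poly a) N x)\<^sup>2 * (\<Prod>j<N. laguerre_weight a (x j) * x j ^ e j))
      ((\<Prod>i<N. fact i / fact (a + i)) *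
        (\<Sum>\<sigma> | \<sigma> permutes {..<N}. \<Prod>j<N. LUE_moment_summand a (e j) (\<sigma> j)))"
    using has_bochner_integral_alternant_square[of N "laguerre_poly a" a e] by simp
  then have "has_bochner_integral (PiM {..<N} (\<lambda>_. lborel))
      (\<lambda>x. (\<Prod>i<N. fact (a + i))\<^sup>2 *
        ((alternant (laguerre_poly a) N x)\<^sup>2 * (\<Prod>j<N. laguerre_weight a (x j) * x j ^ e j)))
      ((\<Prod>i<N. fact (a + i))\<^sup>2 * ((\<Prod>i<N. fact i / fact (a + i)) *
        (\<Sum>\<sigma> | \<sigma> permutes {..<N}. \<Prod>j<N. LUE_moment_summand a (e j) (\<sigma> j))))"
    by (intro has_bochner_integral_mult_right)
  moreover have "(\<lambda>x. (\<Prod>i<N. fact (a + i))\<^sup>2 *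
        ((alternant (laguerre_poly a) N x)\<^sup>2 * (\<Prod>j<N. laguerre_weight a (x j) * x j ^ e j))) =
      (\<lambda>x. LUE_weight N a x * (\<Prod>j<N. x j ^ e j))"
    by (simp add: LUE_weight_eq_alternant_square prod.distrib mult_ac)
  moreover have "(\<Prod>i<N. fact (a + i))\<^sup>2 * (\<Prod>i<N. fact i / fact (a + i)) = (\<Prod>i<N. fact i * fact (a + i) :: real)"
    by (simp add: power2_eq_square prod.distrib[symmetric] mult.commute)
  ultimately show ?thesis
    by (simp only: mult.assoc[symmetric])
qed

lemma has_bochner_integral_LUE_weight:
  "has_bochner_integral (PiM {..<N} (\<lambda>_. lborel)) (LUE_weight N a)
     ((\<Prod>i<N. fact i * fact (a + i)) * fact N)"
  using has_bochner_integral_LUE_weight_monomial[of 0 "\<lambda>_. 0" N a] by (simp add: card_permutations)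

lemma has_bochner_integral_power_sum_LUE_weight:
  "has_bochner_integral (PiM {..<N} (\<lambda>_. lborel)) (\<lambda>x. (\<Sum>l<N. x l ^ p) * LUE_weight N a x)
     ((\<Prod>i<N. fact i * fact (a + i)) * fact N * (\<Sum>k<N. LUE_moment_summand a p k))"
proof -
  let ?Z = "\<Prod>i<N. fact i * fact (a + i) :: real"
  let ?T = "LUE_moment_summand a p"
  have "has_bochner_integral (PiM {..<N} (\<lambda>_. lborel)) (\<lambda>x. LUE_weight N a x * x l ^ p)
      (?Z * (\<Sum>\<sigma> | \<sigma> permutes {..<N}. ?T (\<sigma> l)))" if "l < N" for l
    using has_bochner_integral_LUE_weight_monomial[of l "\<lambda>j. if j = l then p else 0" N a] that
    by (simp add: if_distrib if_distribR prod.delta cong: if_cong)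
  then have "has_bochner_integral (PiM {..<N} (\<lambda>_. lborel)) (\<lambda>x. \<Sum>l<N. LUE_weight N a x * x l ^ p)
      (\<Sum>l<N. ?Z * (\<Sum>\<sigma> | \<sigma> permutes {..<N}. ?T (\<sigma> l)))"
    by (intro has_bochner_integral_sum) simp
  also have "(\<lambda>x. \<Sum>l<N. LUE_weight N a x * x l ^ p) = (\<lambda>x. (\<Sum>l<N. x l ^ p) * LUE_weight N a x)"
    by (simp add: sum_distrib_left mult.commute)
  also have "(\<Sum>l<N. ?Z * (\<Sum>\<sigma> | \<sigma> permutes {..<N}. ?T (\<sigma> l))) =
      ?Z * (\<Sum>\<sigma> | \<sigma> permutes {..<N}. \<Sum>l<N. ?T (\<sigma> l))"
    by (subst sum.swap) (simp add: sum_distrib_left)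
  also have "\<dots> = ?Z * fact N * (\<Sum>k<N. ?T k)"
    by (simp add: sum_permutes_sum_apply)
  finally show ?thesis .
qed

theorem proposition2p1:
  fixes N \<alpha> p :: nat
  shows "LUE_moment N \<alpha> p =
    fact p * (\<Sum>j<N. \<Sum>i\<le>p.
       real ((p choose i) * ((\<alpha> + j) choose i) * ((p - i + j) choose j)))"
proof -
  have "(\<Prod>i<N. fact i * fact (\<alpha> + i)) * fact N \<noteq> (0::real)" by simp
  then have "LUE_moment N \<alpha> p = (\<Sum>k<N. LUE_moment_summand \<alpha> p k)"
    using has_bochner_integral_integral_eq[OF has_bochner_integral_LUE_weight]
      has_bochner_integral_integral_eq[OF has_bochner_integral_power_sum_LUE_weight]
    by (simp add: LUE_moment_def)
  then show ?thesis by (simp add: LUE_moment_summand_def sum_distrib_left)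
qed

end
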